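(* Let $\mu\in(0,\tfrac12]$ and consider the spatial circular restricted three-body problem in the rotating frame, with primaries fixed at $(-\mu,0,0)$ and $(1-\mu,0,0)$. Let $(x_{eq},0,0)$ be any of the three collinear Lagrange points $L_1,L_2,L_3$, and set $$c:=\frac{1-\mu}{|x_{eq}+\mu|^3}+\frac{\mu}{|x_{eq}-1+\mu|^3}.$$ Define the vertical frequency $\omega_v:=\sqrt{c}$ and the planar frequency $$\omega_p:=\Big(\beta_1+\sqrt{\beta_1^2+\beta_2}\Big)^{1/2},\qquad \beta_1=2-\tfrac12\big(U_{xx}^{eq}+U_{yy}^{eq}\big),\quad \beta_2=-U_{xx}^{eq}U_{yy}^{eq},$$ where $U_{xx}^{eq}=2c+1$, $U_{yy}^{eq}=1-c$ (so that the linearized flow at the Lagrange point has eigenvalues $\pm\lambda$ real, $\pm i\omega_p$, $\pm i\omega_v$). Then $$\omega_v<\omega_p<2\omega_v.$$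
   Context: The equations of motion of the spatial circular restricted three-body problem are $\ddot x=2\dot y+x-(1-\mu)\frac{x+\mu}{r_1^3}-\mu\frac{x-1+\mu}{r_2^3}$, $\ddot y=-2\dot x+y-\big(\frac{1-\mu}{r_1^3}+\frac{\mu}{r_2^3}\big)y$, $\ddot z=-\big(\frac{1-\mu}{r_1^3}+\frac{\mu}{r_2^3}\big)z$, with $r_1=((x+\mu)^2+y^2+z^2)^{1/2}$, $r_2=((x-1+\mu)^2+y^2+z^2)^{1/2}$. The collinear Lagrange points are the equilibria on the $x$-axis. With $U(x,y,z)=\tfrac12(x^2+y^2)+\frac{1-\mu}{r_1}+\frac{\mu}{r_2}$, the linearization at $(x_{eq},0,0)$ is $\ddot\xi-2\dot\eta=U^{eq}_{xx}\xi$, $\ddot\eta+2\dot\xi=U^{eq}_{yy}\eta$, $\ddot\zeta=U^{eq}_{zz}\zeta$, with $U^{eq}_{xx}=2c+1$, $U^{eq}_{yy}=1-c$, $U^{eq}_{zz}=-c$. *)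

theory Defs
  imports Complex_Main
begin

definition r1 :: "real \<Rightarrow> real \<Rightarrow> real \<Rightarrow> real \<Rightarrow> real" where
  "r1 mu x y z = sqrt ((x + mu)^2 + y^2 + z^2)"

definition r2 :: "real \<Rightarrow> real \<Rightarrow> real \<Rightarrow> real \<Rightarrow> real" where
  "r2 mu x y z = sqrt ((x - 1 + mu)^2 + y^2 + z^2)"

definition accel_x :: "real \<Rightarrow> real \<Rightarrow> real \<Rightarrow> real \<Rightarrow> real \<Rightarrow> real \<Rightarrow> real" where
  "accel_x mu x y z vx vy = 2 * vy + x - (1 - mu) * (x + mu) / (r1 mu x y z)^3
     - mu * (x - 1 + mu) / (r2 mu x y z)^3"

definition accel_y :: "real \<Rightarrow> real \<Rightarrow> real \<Rightarrow> real \<Rightarrow> real \<Rightarrow> real \<Rightarrow> real" where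
  "accel_y mu x y z vx vy = - 2 * vx + y - ((1 - mu) / (r1 mu x y z)^3 + mu / (r2 mu x y z)^3) * y"

definition accel_z :: "real \<Rightarrow> real \<Rightarrow> real \<Rightarrow> real \<Rightarrow> real" where
  "accel_z mu x y z = - ((1 - mu) / (r1 mu x y z)^3 + mu / (r2 mu x y z)^3) * z"

definition equilibrium :: "real \<Rightarrow> real \<Rightarrow> real \<Rightarrow> real \<Rightarrow> bool" where
  "equilibrium mu x y z \<longleftrightarrow>
     r1 mu x y z \<noteq> 0 \<and> r2 mu x y z \<noteq> 0 \<and>
     accel_x mu x y z 0 0 = 0 \<and> accel_y mu x y z 0 0 = 0 \<and> accel_z mu x y z = 0"

definition collinear_lagrange_point :: "real \<Rightarrow> real \<Rightarrow> bool" where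
  "collinear_lagrange_point mu xeq \<longleftrightarrow> equilibrium mu xeq 0 0"

end

theory Submission
  imports Defs
begin

text \<open>With \<open>a = x + mu\<close> and \<open>b = x - 1 + mu\<close> the signed distances of a collinear Lagrange
  point to the two primaries, the x-component of the equilibrium condition is a balance
  \<open>(1-mu) a (1 - 1/|a|^3) + mu b (1 - 1/|b|^3) = 0\<close>. Since \<open>a - b = 1\<close>, it forces
  \<open>c = (1-mu)/|a|^3 + mu/|b|^3 > 1\<close>: between the primaries both distances are below 1,
  and outside them the balance rearranges to \<open>b (c - 1) = (1-mu) (1 - 1/|a|^3)\<close> and
  \<open>a (c - 1) = -mu (1 - 1/|b|^3)\<close>, whose right-hand sides have the required sign since
  the distance to the farther primary exceeds 1. The linearisation then gives
  \<open>omega_p^2 = 1 - c/2 + sqrt (9c^2/4 - 2c)\<close>, and \<open>c < omega_p^2 < 4c\<close> both reduce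
  to \<open>c > 1\<close>.\<close>

lemma collinear_lagrange_point_balance:
  assumes "collinear_lagrange_point mu x"
  shows "x + mu \<noteq> 0" "x - 1 + mu \<noteq> 0"
    and "(1 - mu) * (x + mu) * (1 - 1 / \<bar>x + mu\<bar>^3)
           + mu * (x - 1 + mu) * (1 - 1 / \<bar>x - 1 + mu\<bar>^3) = 0"
proof -
  have eq: "x - (1 - mu) * (x + mu) / \<bar>x + mu\<bar>^3 - mu * (x - 1 + mu) / \<bar>x - 1 + mu\<bar>^3 = 0"
    and "x + mu \<noteq> 0" "x - 1 + mu \<noteq> 0"
    using assms
    by (auto simp: collinear_lagrange_point_def equilibrium_def accel_x_def r1_def r2_def)
  then show "x + mu \<noteq> 0" "x - 1 + mu \<noteq> 0" by auto
  from eq show "(1 - mu) * (x + mu) * (1 - 1 / \<bar>x + mu\<bar>^3)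
      + mu * (x - 1 + mu) * (1 - 1 / \<bar>x - 1 + mu\<bar>^3) = 0"
    by (simp add: algebra_simps add_divide_distrib diff_divide_distrib)
qed

lemma inverse_cube_less_one: "1 < (t::real) \<Longrightarrow> 1 / t^3 < 1"
  by (simp add: divide_less_eq one_less_power)

lemma inverse_cube_greater_one: "0 < (t::real) \<Longrightarrow> t < 1 \<Longrightarrow> 1 < 1 / t^3"
  by (simp add: less_divide_eq power_less_one_iff)

lemma force_balance_imp_weighted_inverse_cubes_gt:
  fixes m1 m2 a b :: real
  assumes m: "0 < m1" "0 < m2" and ab: "a - b = 1" "a \<noteq> 0" "b \<noteq> 0"
    and balance: "m1 * a * (1 - 1 / \<bar>a\<bar>^3) + m2 * b * (1 - 1 / \<bar>b\<bar>^3) = 0"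
  shows "m1 + m2 < m1 / \<bar>a\<bar>^3 + m2 / \<bar>b\<bar>^3"
proof -
  define f where "f = m1 / \<bar>a\<bar>^3 + m2 / \<bar>b\<bar>^3 - (m1 + m2)"
  have b_f: "b * f = m1 * (1 - 1 / \<bar>a\<bar>^3)"
    and a_f: "a * f = - m2 * (1 - 1 / \<bar>b\<bar>^3)"
    using balance ab(1) unfolding f_def by (simp_all add: algebra_simps add_divide_distrib diff_divide_distrib)
  consider "0 < b" | "b < 0" "0 < a" | "a < 0"
    using ab by linarith
  then have "0 < f"
  proof cases
    case 1
    then have "1 / \<bar>a\<bar>^3 < 1" using ab(1) by (intro inverse_cube_less_one) simp
    then have "0 < b * f" using b_f m by simp
    with 1 show ?thesis by (simp add: zero_less_mult_iff)
  next
    case 2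
    then have "1 < 1 / \<bar>a\<bar>^3" "1 < 1 / \<bar>b\<bar>^3"
      using ab(1) inverse_cube_greater_one[of "\<bar>a\<bar>"] inverse_cube_greater_one[of "\<bar>b\<bar>"]
      by simp_all
    then have "m1 * 1 < m1 * (1 / \<bar>a\<bar>^3)" "m2 * 1 < m2 * (1 / \<bar>b\<bar>^3)"
      using m mult_strict_left_mono by blast+
    then show ?thesis unfolding f_def by simp
  next
    case 3
    then have "1 / \<bar>b\<bar>^3 < 1" using ab(1) by (intro inverse_cube_less_one) simp
    then have "a * f < 0" using a_f m by simp
    with 3 show ?thesis by (simp add: mult_less_0_iff)
  qed
  then show ?thesis unfolding f_def by simp
qed

lemma collinear_lagrange_point_c_gt_one:
  assumes "0 < mu" "mu < 1" "collinear_lagrange_point mu x"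
  shows "1 < (1 - mu) / \<bar>x + mu\<bar>^3 + mu / \<bar>x - 1 + mu\<bar>^3"
  using force_balance_imp_weighted_inverse_cubes_gt[of "1 - mu" mu "x + mu" "x - 1 + mu"]
    collinear_lagrange_point_balance[OF assms(3)] assms(1,2)
  by simp

lemma planar_frequency_sq_bounds:
  fixes c :: real
  assumes "1 < c"
  shows "c < 1 - c/2 + sqrt (9 * c^2 / 4 - 2 * c)"
    and "1 - c/2 + sqrt (9 * c^2 / 4 - 2 * c) < 4 * c"
proof -
  have "(3 * c / 2 - 1)^2 < 9 * c^2 / 4 - 2 * c"
    using assms by (simp add: power2_eq_square algebra_simps)
  then have "3 * c / 2 - 1 < sqrt (9 * c^2 / 4 - 2 * c)"
    by (rule real_less_rsqrt)
  then show "c < 1 - c/2 + sqrt (9 * c^2 / 4 - 2 * c)" by simp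
  have "0 < c * (18 * c - 7) + 1"
    using assms by (simp add: add_pos_nonneg)
  then have "9 * c^2 / 4 - 2 * c < (9 * c / 2 - 1)^2"
    by (simp add: power2_eq_square algebra_simps)
  then have "sqrt (9 * c^2 / 4 - 2 * c) < 9 * c / 2 - 1"
    using assms by (intro real_less_lsqrt) simp_all
  then show "1 - c/2 + sqrt (9 * c^2 / 4 - 2 * c) < 4 * c" by simp
qed

theorem mainTheorem1:
  fixes mu xeq c Uxx Uyy beta1 beta2 omega_v omega_p :: real
  assumes "0 < mu" and "mu \<le> 1/2"
    and "collinear_lagrange_point mu xeq"
    and "c = (1 - mu) / \<bar>xeq + mu\<bar>^3 + mu / \<bar>xeq - 1 + mu\<bar>^3"
    and "Uxx = 2 * c + 1" and "Uyy = 1 - c"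
    and "beta1 = 2 - (Uxx + Uyy) / 2" and "beta2 = - Uxx * Uyy"
    and "omega_v = sqrt c"
    and "omega_p = sqrt (beta1 + sqrt (beta1^2 + beta2))"
  shows "omega_v < omega_p \<and> omega_p < 2 * omega_v"
proof -
  have c: "1 < c"
    using collinear_lagrange_point_c_gt_one[of mu xeq] assms(1-4) by simp
  have beta1: "beta1 = 1 - c/2"
    using assms(5-7) by (simp add: field_simps)
  have "beta1^2 + beta2 = 9 * c^2 / 4 - 2 * c"
    unfolding beta1 assms(8,5,6) by (simp add: power2_eq_square algebra_simps)
  with beta1 have omega_p: "omega_p = sqrt (1 - c/2 + sqrt (9 * c^2 / 4 - 2 * c))"
    using assms(10) by simp
  have "sqrt (4 * c) = 2 * omega_v"
    using assms(9) by (simp add: real_sqrt_mult)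
  then show ?thesis
    using planar_frequency_sq_bounds[OF c] omega_p assms(9) real_sqrt_less_mono by metis
qed

end
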